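(* Let $(G,\boldsymbol{\gamma})$ be a Ross graph. Let $e$ be either an edge $ij$ with $i\neq j$ carrying any color in $\mathbb{Z}/2\mathbb{Z}$, or a self-loop at any vertex $i$ carrying color $1$. Then the colored graph obtained from $(G,\boldsymbol{\gamma})$ by adding $e$ is a reflection-$(2,2)$ graph.
   Context: A colored graph $(G,\boldsymbol{\gamma})$ is a finite directed multigraph $G$ (self-loops and parallel edges allowed) with a color $\gamma_{ij}\in\mathbb{Z}/2\mathbb{Z}$ on each edge. $\rho:H_1(G,\mathbb{Z})\to\mathbb{Z}/2\mathbb{Z}$ sends a cycle to the sum of its edge colors; the $\rho$-image of a subgraph is the image of its cycles, trivial if $\{0\}$. For a subgraph $G'$: $n',m'$ are its numbers of vertices and edges, $c'$ (resp. $c'_0$) the number of its connected components with non-trivial (resp. trivial) $\rho$-image. With $n$ vertices and $m$ edges in $G$: $(G,\boldsymbol{\gamma})$ is a Ross graph if $m=2n-2$ and every subgraph satisfies $m'\le 2n'-2c'-3c'_0$; it is a reflection-$(2,2)$ graph if $m=2n-1$ and every subgraph satisfies $m'\le 2n'-c'-2c'_0$. *)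

theory Defs
  imports "Graph_Theory.Digraph" "HOL-Library.Z2"
begin

text \<open>A colored graph is a finite directed multigraph G (a fin_digraph in the sense
of Graph_Theory, self-loops and parallel arcs allowed) together with a coloring
col :: 'b => bit of its arcs by Z/2Z (type bit).\<close>

inductive uwalk :: "('a,'b) pre_digraph \<Rightarrow> 'b set \<Rightarrow> 'a \<Rightarrow> 'b list \<Rightarrow> 'a \<Rightarrow> bool"
  for G :: "('a,'b) pre_digraph" and F :: "'b set" where
  uwalk_Nil: "uwalk G F u [] u"
| uwalk_fwd: "e \<in> F \<Longrightarrow> tail G e = u \<Longrightarrow> uwalk G F (head G e) es v \<Longrightarrow> uwalk G F u (e # es) v"
| uwalk_bwd: "e \<in> F \<Longrightarrow> head G e = u \<Longrightarrow> uwalk G F (tail G e) es v \<Longrightarrow> uwalk G F u (e # es) v"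

definition sub_verts :: "('a,'b) pre_digraph \<Rightarrow> 'b set \<Rightarrow> 'a set" where
  "sub_verts G F = tail G ` F \<union> head G ` F"

definition sub_comps :: "('a,'b) pre_digraph \<Rightarrow> 'b set \<Rightarrow> 'a set set" where
  "sub_comps G F = (\<lambda>u. {v \<in> sub_verts G F. \<exists>es. uwalk G F u es v}) ` sub_verts G F"

text \<open>A component C of the subgraph spanned by F has non-trivial rho-image iff some
cycle (closed walk) in it has color sum 1; closed walks generate H_1 of the component.\<close>
definition nontrivial_comp :: "('a,'b) pre_digraph \<Rightarrow> ('b \<Rightarrow> bit) \<Rightarrow> 'b set \<Rightarrow> 'a set \<Rightarrow> bool" where
  "nontrivial_comp G col F C \<longleftrightarrow>
     (\<exists>u\<in>C. \<exists>es. uwalk G F u es u \<and> (\<Sum>e\<leftarrow>es. col e) = 1)"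

definition c_nontriv :: "('a,'b) pre_digraph \<Rightarrow> ('b \<Rightarrow> bit) \<Rightarrow> 'b set \<Rightarrow> nat" where
  "c_nontriv G col F = card {C \<in> sub_comps G F. nontrivial_comp G col F C}"

definition c_triv :: "('a,'b) pre_digraph \<Rightarrow> ('b \<Rightarrow> bit) \<Rightarrow> 'b set \<Rightarrow> nat" where
  "c_triv G col F = card {C \<in> sub_comps G F. \<not> nontrivial_comp G col F C}"

definition ross_graph :: "('a,'b) pre_digraph \<Rightarrow> ('b \<Rightarrow> bit) \<Rightarrow> bool" where
  "ross_graph G col \<longleftrightarrow> fin_digraph G \<and>
     int (card (arcs G)) = 2 * int (card (verts G)) - 2 \<and>
     (\<forall>F \<subseteq> arcs G. int (card F) \<le> 2 * int (card (sub_verts G F))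
         - 2 * int (c_nontriv G col F) - 3 * int (c_triv G col F))"

definition reflection_22_graph :: "('a,'b) pre_digraph \<Rightarrow> ('b \<Rightarrow> bit) \<Rightarrow> bool" where
  "reflection_22_graph G col \<longleftrightarrow> fin_digraph G \<and>
     int (card (arcs G)) = 2 * int (card (verts G)) - 1 \<and>
     (\<forall>F \<subseteq> arcs G. int (card F) \<le> 2 * int (card (sub_verts G F))
         - int (c_nontriv G col F) - 2 * int (c_triv G col F))"

end

theory Submission imports Defs begin

text \<open>Let F be a set of arcs of G + e containing e. Split F into the arc set A of the
connected component through e and the remaining arcs B; the two parts have disjoint vertex
sets, so arc and vertex numbers add up and component counts are subadditive. B is a
subgraph of the Ross graph, and the Ross bound is stronger than the reflection-(2,2) bound.
For the connected part A, apply the Ross bound to A - {e}, which has at least one component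
unless it is empty: if A has non-trivial \<rho>-image, the one extra arc is paid by the surplus
2c' + 3c'_0 \<ge> 2; if A has trivial \<rho>-image, then e is not a self-loop (those have colour 1),
so A has at least two vertices, and A - {e} has trivial components only, each contributing
a surplus of 3.\<close>

definition ross_sparse :: "('a,'b) pre_digraph \<Rightarrow> ('b \<Rightarrow> bit) \<Rightarrow> 'b set \<Rightarrow> bool" where
  "ross_sparse G col F \<longleftrightarrow> int (card F) \<le> 2 * int (card (sub_verts G F))
     - 2 * int (c_nontriv G col F) - 3 * int (c_triv G col F)"

definition refl22_sparse :: "('a,'b) pre_digraph \<Rightarrow> ('b \<Rightarrow> bit) \<Rightarrow> 'b set \<Rightarrow> bool" where
  "refl22_sparse G col F \<longleftrightarrow> int (card F) \<le> 2 * int (card (sub_verts G F))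
     - int (c_nontriv G col F) - 2 * int (c_triv G col F)"

lemma ross_sparse_imp_refl22_sparse: "ross_sparse G col F \<Longrightarrow> refl22_sparse G col F"
  unfolding ross_sparse_def refl22_sparse_def by linarith

lemma uwalk_mono: "uwalk G F u es v \<Longrightarrow> F \<subseteq> F' \<Longrightarrow> uwalk G F' u es v"
  by (induction rule: uwalk.induct) (auto intro: uwalk.intros)

lemma uwalk_append: "uwalk G F u es v \<Longrightarrow> uwalk G F v fs w \<Longrightarrow> uwalk G F u (es @ fs) w"
  by (induction rule: uwalk.induct) (auto intro: uwalk.intros)

lemma uwalk_rev: "uwalk G F u es v \<Longrightarrow> uwalk G F v (rev es) u"
proof (induction rule: uwalk.induct)
  case (uwalk_fwd e u es v)
  then have "uwalk G F (head G e) [e] u" by (auto intro: uwalk.intros)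
  with uwalk_fwd show ?case using uwalk_append by fastforce
next
  case (uwalk_bwd e u es v)
  then have "uwalk G F (tail G e) [e] u" by (auto intro: uwalk.intros)
  with uwalk_bwd show ?case using uwalk_append by fastforce
qed (auto intro: uwalk.intros)

lemma uwalk_end_in_sub_verts: "uwalk G F u es v \<Longrightarrow> v = u \<or> v \<in> sub_verts G F"
  by (induction rule: uwalk.induct) (auto simp: sub_verts_def)

lemma uwalk_arc_ends_iff:
  assumes "f \<in> F"
  shows "(\<exists>es. uwalk G F u es (tail G f)) \<longleftrightarrow> (\<exists>es. uwalk G F u es (head G f))"
proof -
  have "uwalk G F (tail G f) [f] (head G f)" "uwalk G F (head G f) [f] (tail G f)"
    using assms by (auto intro: uwalk.intros)
  then show ?thesis using uwalk_append by metis
qed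

lemma uwalk_disjoint_Un:
  "uwalk G F u es v \<Longrightarrow> u \<notin> sub_verts G B \<Longrightarrow> F \<subseteq> A \<union> B
   \<Longrightarrow> sub_verts G A \<inter> sub_verts G B = {} \<Longrightarrow> uwalk G A u es v"
proof (induction rule: uwalk.induct)
  case (uwalk_fwd e u es v)
  then have "e \<in> A" by (auto simp: sub_verts_def)
  with uwalk_fwd have "head G e \<notin> sub_verts G B" by (auto simp: sub_verts_def)
  with uwalk_fwd \<open>e \<in> A\<close> show ?case by (auto intro: uwalk.intros)
next
  case (uwalk_bwd e u es v)
  then have "e \<in> A" by (auto simp: sub_verts_def)
  with uwalk_bwd have "tail G e \<notin> sub_verts G B" by (auto simp: sub_verts_def)
  with uwalk_bwd \<open>e \<in> A\<close> show ?case by (auto intro: uwalk.intros)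
qed (auto intro: uwalk.intros)

lemma uwalk_cong_tail_head:
  assumes "tail G' = tail G" "head G' = head G"
  shows "uwalk G F u es v \<Longrightarrow> uwalk G' F u es v"
  by (induction rule: uwalk.induct) (auto intro: uwalk.intros simp: assms)

lemma refl22_sparse_add_arc:
  "refl22_sparse (pre_digraph.add_arc G e) col F \<longleftrightarrow> refl22_sparse G col F"
proof -
  let ?H = "pre_digraph.add_arc G e"
  have "uwalk ?H = uwalk G"
    using uwalk_cong_tail_head[of ?H G] uwalk_cong_tail_head[of G ?H]
    by (intro ext iffI) (simp_all add: pre_digraph.add_arc_simps)
  moreover have "sub_verts ?H = sub_verts G"
    by (simp add: fun_eq_iff sub_verts_def pre_digraph.add_arc_simps)
  ultimately show ?thesis
    by (simp add: refl22_sparse_def c_nontriv_def c_triv_def sub_comps_def nontrivial_comp_def)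
qed

lemma sub_verts_mono: "A \<subseteq> F \<Longrightarrow> sub_verts G A \<subseteq> sub_verts G F"
  by (auto simp: sub_verts_def)

lemma sub_verts_Un: "sub_verts G (A \<union> B) = sub_verts G A \<union> sub_verts G B"
  by (auto simp: sub_verts_def)

lemma finite_sub_verts: "finite F \<Longrightarrow> finite (sub_verts G F)"
  by (auto simp: sub_verts_def)

lemma finite_sub_comps: "finite F \<Longrightarrow> finite (sub_comps G F)"
  by (auto simp: sub_comps_def finite_sub_verts)

lemma sub_comps_subset_sub_verts: "C \<in> sub_comps G F \<Longrightarrow> C \<subseteq> sub_verts G F"
  by (auto simp: sub_comps_def)

lemma c_nontriv_plus_c_triv_pos:
  assumes "finite F" "F \<noteq> {}"
  shows "1 \<le> c_nontriv G col F + c_triv G col F"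
proof -
  from assms obtain f where "f \<in> F" by blast
  then have ne: "sub_comps G F \<noteq> {}" unfolding sub_comps_def sub_verts_def by blast
  have fin: "finite (sub_comps G F)" using finite_sub_comps[OF assms(1)] .
  have "1 \<le> card (sub_comps G F)" using ne fin by (simp add: Suc_le_eq card_gt_0_iff)
  also have "sub_comps G F = {C \<in> sub_comps G F. nontrivial_comp G col F C}
                        \<union> {C \<in> sub_comps G F. \<not> nontrivial_comp G col F C}" by blast
  also have "card \<dots> \<le> c_nontriv G col F + c_triv G col F"
    unfolding c_nontriv_def c_triv_def by (rule card_Un_le)
  finally show ?thesis .
qed

lemma sub_comps_eq_singleton:
  assumes "r \<in> sub_verts G A" and reach: "\<forall>v \<in> sub_verts G A. \<exists>es. uwalk G A r es v"
  shows "sub_comps G A = {sub_verts G A}"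
proof -
  have "{v \<in> sub_verts G A. \<exists>es. uwalk G A u es v} = sub_verts G A"
    if u: "u \<in> sub_verts G A" for u
  proof -
    obtain es1 where es1: "uwalk G A r es1 u" using reach u by blast
    have "uwalk G A u (rev es1 @ es2) v" if "uwalk G A r es2 v" for es2 v
      by (rule uwalk_append[OF uwalk_rev[OF es1] that])
    then show ?thesis using reach by blast
  qed
  then have "sub_comps G A = (\<lambda>u. sub_verts G A) ` sub_verts G A"
    unfolding sub_comps_def by (rule image_cong[OF refl])
  then show ?thesis using assms(1) by blast
qed

lemma split_off_component:
  assumes "e \<in> F"
  obtains A B where "F = A \<union> B" "A \<inter> B = {}" "e \<in> A"
    "sub_verts G A \<inter> sub_verts G B = {}" "sub_comps G A = {sub_verts G A}"
proof -
  define R where "R = {v. \<exists>es. uwalk G F (tail G e) es v}"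
  define A where "A = {f \<in> F. tail G f \<in> R}"
  define B where "B = F - A"
  have step: "tail G f \<in> R \<longleftrightarrow> head G f \<in> R" if "f \<in> F" for f
    unfolding R_def using uwalk_arc_ends_iff[OF that] by simp
  have r: "tail G e \<in> R" unfolding R_def by (auto intro: uwalk.intros)
  have eA: "e \<in> A" using r assms unfolding A_def by auto
  have svA: "sub_verts G A \<subseteq> R" unfolding sub_verts_def A_def using step by auto
  have svB: "sub_verts G B \<inter> R = {}" unfolding sub_verts_def A_def B_def using step by auto
  have disj: "sub_verts G A \<inter> sub_verts G B = {}" using svA svB by blast
  have "uwalk G A (tail G e) es v" if "uwalk G F (tail G e) es v" for es v
    using uwalk_disjoint_Un[OF that, of B A] svB r disj unfolding B_def by blast
  then have "\<forall>v \<in> sub_verts G A. \<exists>es. uwalk G A (tail G e) es v"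
    using svA unfolding R_def by blast
  moreover have "tail G e \<in> sub_verts G A" using eA unfolding sub_verts_def by blast
  ultimately have "sub_comps G A = {sub_verts G A}" by (rule sub_comps_eq_singleton[rotated])
  moreover have "F = A \<union> B" "A \<inter> B = {}" unfolding A_def B_def by auto
  ultimately show ?thesis using that eA disj by blast
qed

lemma walk_class_disjoint_Un:
  assumes "u \<in> sub_verts G A" "sub_verts G A \<inter> sub_verts G B = {}"
  shows "{v \<in> sub_verts G (A \<union> B). \<exists>es. uwalk G (A \<union> B) u es v}
       = {v \<in> sub_verts G A. \<exists>es. uwalk G A u es v}"
proof -
  have "u \<notin> sub_verts G B" using assms by auto
  then have "uwalk G (A \<union> B) u es v \<longleftrightarrow> uwalk G A u es v" for es v
    using uwalk_disjoint_Un[of G "A \<union> B" u es v B A] uwalk_mono[of G A u es v] assms(2) by blast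
  then show ?thesis using assms(1) uwalk_end_in_sub_verts[of G A u] by (auto simp: sub_verts_Un)
qed

lemma nontrivial_comp_disjoint_Un:
  assumes "C \<subseteq> sub_verts G A" "sub_verts G A \<inter> sub_verts G B = {}"
  shows "nontrivial_comp G col (A \<union> B) C \<longleftrightarrow> nontrivial_comp G col A C"
proof -
  have "uwalk G (A \<union> B) u es u \<longleftrightarrow> uwalk G A u es u" if "u \<in> C" for u es
    using that assms uwalk_disjoint_Un[of G "A \<union> B" u es u B A] uwalk_mono[of G A u es u] by blast
  then show ?thesis unfolding nontrivial_comp_def by auto
qed

lemma sub_comps_disjoint_Un:
  assumes "C \<in> sub_comps G (A \<union> B)" "sub_verts G A \<inter> sub_verts G B = {}"
  shows "C \<in> sub_comps G A \<and> (nontrivial_comp G col (A \<union> B) C \<longleftrightarrow> nontrivial_comp G col A C)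
       \<or> C \<in> sub_comps G B \<and> (nontrivial_comp G col (A \<union> B) C \<longleftrightarrow> nontrivial_comp G col B C)"
proof -
  obtain u where u: "u \<in> sub_verts G (A \<union> B)"
    and C: "C = {v \<in> sub_verts G (A \<union> B). \<exists>es. uwalk G (A \<union> B) u es v}"
    using assms(1) unfolding sub_comps_def by auto
  have side: "C \<in> sub_comps G X \<and> (nontrivial_comp G col (X \<union> Y) C \<longleftrightarrow> nontrivial_comp G col X C)"
    if "u \<in> sub_verts G X" "sub_verts G X \<inter> sub_verts G Y = {}" "X \<union> Y = A \<union> B" for X Y
  proof -
    have CX: "C = {v \<in> sub_verts G X. \<exists>es. uwalk G X u es v}"
      using C walk_class_disjoint_Un[OF that(1,2)] that(3) by simp
    then show ?thesis using that(1) nontrivial_comp_disjoint_Un[OF _ that(2)]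
      unfolding sub_comps_def by auto
  qed
  from u consider "u \<in> sub_verts G A" | "u \<in> sub_verts G B" by (auto simp: sub_verts_Un)
  then show ?thesis
    using side[of A B] side[of B A] assms(2) by cases (auto simp: Un_commute Int_commute)
qed

lemma c_nontriv_disjoint_Un_le:
  assumes "finite A" "finite B" "sub_verts G A \<inter> sub_verts G B = {}"
  shows "c_nontriv G col (A \<union> B) \<le> c_nontriv G col A + c_nontriv G col B"
proof -
  have "{C \<in> sub_comps G (A \<union> B). nontrivial_comp G col (A \<union> B) C}
      \<subseteq> {C \<in> sub_comps G A. nontrivial_comp G col A C} \<union> {C \<in> sub_comps G B. nontrivial_comp G col B C}"
    using sub_comps_disjoint_Un[OF _ assms(3), of _ col] by blast
  then have "c_nontriv G col (A \<union> B) \<le> card ({C \<in> sub_comps G A. nontrivial_comp G col A C}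
      \<union> {C \<in> sub_comps G B. nontrivial_comp G col B C})"
    unfolding c_nontriv_def by (rule card_mono[rotated]) (simp add: assms finite_sub_comps)
  also have "\<dots> \<le> c_nontriv G col A + c_nontriv G col B" unfolding c_nontriv_def by (rule card_Un_le)
  finally show ?thesis .
qed

lemma c_triv_disjoint_Un_le:
  assumes "finite A" "finite B" "sub_verts G A \<inter> sub_verts G B = {}"
  shows "c_triv G col (A \<union> B) \<le> c_triv G col A + c_triv G col B"
proof -
  have "{C \<in> sub_comps G (A \<union> B). \<not> nontrivial_comp G col (A \<union> B) C}
      \<subseteq> {C \<in> sub_comps G A. \<not> nontrivial_comp G col A C} \<union> {C \<in> sub_comps G B. \<not> nontrivial_comp G col B C}"
    using sub_comps_disjoint_Un[OF _ assms(3), of _ col] by blast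
  then have "c_triv G col (A \<union> B) \<le> card ({C \<in> sub_comps G A. \<not> nontrivial_comp G col A C}
      \<union> {C \<in> sub_comps G B. \<not> nontrivial_comp G col B C})"
    unfolding c_triv_def by (rule card_mono[rotated]) (simp add: assms finite_sub_comps)
  also have "\<dots> \<le> c_triv G col A + c_triv G col B" unfolding c_triv_def by (rule card_Un_le)
  finally show ?thesis .
qed

lemma refl22_sparse_disjoint_Un:
  assumes "finite A" "finite B" "A \<inter> B = {}" "sub_verts G A \<inter> sub_verts G B = {}"
    and "refl22_sparse G col A" "refl22_sparse G col B"
  shows "refl22_sparse G col (A \<union> B)"
proof -
  have "card (A \<union> B) = card A + card B" using assms(1-3) by (rule card_Un_disjoint)
  moreover have "card (sub_verts G (A \<union> B)) = card (sub_verts G A) + card (sub_verts G B)"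
    unfolding sub_verts_Un using assms(1,2,4) by (intro card_Un_disjoint finite_sub_verts)
  ultimately show ?thesis
    using assms(5,6) c_nontriv_disjoint_Un_le[OF assms(1,2,4), of col]
      c_triv_disjoint_Un_le[OF assms(1,2,4), of col]
    unfolding refl22_sparse_def by linarith
qed

lemma connected_c_nontriv_c_triv:
  assumes "sub_comps G A = {sub_verts G A}"
  shows "c_nontriv G col A = (if nontrivial_comp G col A (sub_verts G A) then 1 else 0)"
    and "c_triv G col A = (if nontrivial_comp G col A (sub_verts G A) then 0 else 1)"
proof -
  have "{C \<in> {S}. P C} = (if P S then {S} else {})" for P :: "'a set \<Rightarrow> bool" and S by auto
  then show "c_nontriv G col A = (if nontrivial_comp G col A (sub_verts G A) then 1 else 0)"
    and "c_triv G col A = (if nontrivial_comp G col A (sub_verts G A) then 0 else 1)"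
    unfolding c_nontriv_def c_triv_def assms by simp_all
qed

lemma nontrivial_comp_self_loop:
  assumes "e \<in> A" "tail G e = head G e" "col e = 1"
  shows "nontrivial_comp G col A (sub_verts G A)"
proof -
  have "uwalk G A (tail G e) [e] (tail G e)" using assms by (auto intro: uwalk.intros)
  moreover have "tail G e \<in> sub_verts G A" using assms(1) unfolding sub_verts_def by blast
  ultimately show ?thesis unfolding nontrivial_comp_def using assms(3) by fastforce
qed

lemma c_nontriv_subset_eq_0:
  assumes "A0 \<subseteq> A" "\<not> nontrivial_comp G col A (sub_verts G A)"
  shows "c_nontriv G col A0 = 0"
proof -
  have "\<not> nontrivial_comp G col A0 C" if "C \<in> sub_comps G A0" for C
  proof
    assume "nontrivial_comp G col A0 C"
    then obtain u es where u: "u \<in> C" and walk: "uwalk G A0 u es u"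
      and odd: "(\<Sum>e\<leftarrow>es. col e) = 1"
      unfolding nontrivial_comp_def by blast
    have "C \<subseteq> sub_verts G A" using sub_comps_subset_sub_verts[OF that] sub_verts_mono[OF assms(1)]
      by (rule subset_trans)
    moreover have "uwalk G A u es u" using walk assms(1) by (rule uwalk_mono)
    ultimately have "nontrivial_comp G col A (sub_verts G A)"
      unfolding nontrivial_comp_def using u odd by blast
    with assms(2) show False ..
  qed
  then have "{C \<in> sub_comps G A0. nontrivial_comp G col A0 C} = {}" by blast
  then show ?thesis unfolding c_nontriv_def by (simp only: card.empty)
qed

lemma connected_refl22_sparse_insert:
  assumes fin: "finite A" and "e \<in> A" and ross: "ross_sparse G col (A - {e})"
    and conn: "sub_comps G A = {sub_verts G A}"
    and loop: "tail G e \<noteq> head G e \<or> col e = 1"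
  shows "refl22_sparse G col A"
proof -
  define S where "S = sub_verts G A"
  define A0 where "A0 = A - {e}"
  have cA: "card A = card A0 + 1" unfolding A0_def using card_Suc_Diff1[OF fin \<open>e \<in> A\<close>] by simp
  have finS: "finite S" unfolding S_def using finite_sub_verts[OF fin] .
  have ends: "tail G e \<in> S" "head G e \<in> S" using \<open>e \<in> A\<close> unfolding S_def sub_verts_def by auto
  then have S_pos: "1 \<le> card S" using finS by (simp add: Suc_le_eq card_gt_0_iff) blast
  have "card (sub_verts G A0) \<le> card S" unfolding S_def A0_def
    by (intro card_mono finite_sub_verts fin sub_verts_mono) auto
  then have A0_le: "int (card A0) + 2 * int (c_nontriv G col A0) + 3 * int (c_triv G col A0)
      \<le> 2 * int (card S)"
    using ross unfolding ross_sparse_def A0_def by linarith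
  have comps0: "1 \<le> c_nontriv G col A0 + c_triv G col A0" if "A0 \<noteq> {}"
    using c_nontriv_plus_c_triv_pos[OF _ that] fin unfolding A0_def by simp
  show ?thesis
  proof (cases "nontrivial_comp G col A S")
    case True
    then have "c_nontriv G col A = 1" "c_triv G col A = 0"
      using connected_c_nontriv_c_triv[OF conn, of col] unfolding S_def by simp_all
    then show ?thesis using cA A0_le comps0 S_pos
      unfolding refl22_sparse_def S_def[symmetric] by (cases "A0 = {}") (simp, linarith)
  next
    case False
    have "tail G e \<noteq> head G e"
    proof
      assume "tail G e = head G e"
      with loop have "nontrivial_comp G col A S"
        unfolding S_def by (simp add: nontrivial_comp_self_loop[OF \<open>e \<in> A\<close>])
      with False show False ..
    qed
    then have S_ge_2: "2 \<le> card S"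
      using card_mono[OF finS, of "{tail G e, head G e}"] ends by simp
    have "c_nontriv G col A0 = 0"
      using False unfolding A0_def S_def by (intro c_nontriv_subset_eq_0) auto
    moreover have "c_nontriv G col A = 0" "c_triv G col A = 1"
      using connected_c_nontriv_c_triv[OF conn, of col] False unfolding S_def by simp_all
    ultimately show ?thesis using cA A0_le comps0 S_ge_2
      unfolding refl22_sparse_def S_def[symmetric] by (cases "A0 = {}") (simp, linarith)
  qed
qed

lemma refl22_sparse_insert:
  assumes "finite F" and ross: "\<forall>F' \<subseteq> F - {e}. ross_sparse G col F'"
    and "tail G e \<noteq> head G e \<or> col e = 1"
  shows "refl22_sparse G col F"
proof (cases "e \<in> F")
  case True
  then obtain A B where AB: "F = A \<union> B" "A \<inter> B = {}" "e \<in> A"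
    "sub_verts G A \<inter> sub_verts G B = {}" "sub_comps G A = {sub_verts G A}"
    by (rule split_off_component)
  have fin: "finite A" "finite B" using \<open>finite F\<close> AB(1) by simp_all
  have "ross_sparse G col (A - {e})" using ross AB(1) by blast
  then have "refl22_sparse G col A"
    by (rule connected_refl22_sparse_insert[of A e G col, OF fin(1) AB(3) _ AB(5) assms(3)])
  moreover have "refl22_sparse G col B"
    using ross AB(1-3) by (blast intro: ross_sparse_imp_refl22_sparse)
  ultimately show ?thesis using refl22_sparse_disjoint_Un[OF fin AB(2,4)] AB(1) by simp
next
  case False
  then show ?thesis using ross by (blast intro: ross_sparse_imp_refl22_sparse)
qed

theorem proposition2:
  fixes G :: "('a,'b) pre_digraph" and col :: "'b \<Rightarrow> bit" and e :: 'b
  assumes "ross_graph G col"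
    and "e \<notin> arcs G"
    and "tail G e \<in> verts G" and "head G e \<in> verts G"
    and "tail G e \<noteq> head G e \<or> col e = 1"
  shows "reflection_22_graph (pre_digraph.add_arc G e) col"
proof -
  let ?H = "pre_digraph.add_arc G e"
  have fin: "fin_digraph G" and card: "int (card (arcs G)) = 2 * int (card (verts G)) - 2"
    and ross: "\<forall>F \<subseteq> arcs G. ross_sparse G col F"
    using assms(1) unfolding ross_graph_def ross_sparse_def by blast+
  interpret fin_digraph G by (rule fin)
  have arcs: "arcs ?H = insert e (arcs G)" and verts: "verts ?H = verts G"
    using assms(3,4) by simp_all
  have "fin_digraph ?H"
    using assms(3,4) by unfold_locales (auto simp: tail_in_verts head_in_verts)
  moreover have "int (card (arcs ?H)) = 2 * int (card (verts ?H)) - 1"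
    using card assms(2) unfolding arcs verts by simp
  moreover have "refl22_sparse ?H col F" if F: "F \<subseteq> arcs ?H" for F
  proof -
    have "finite F" using F unfolding arcs by (rule finite_subset) simp
    moreover have "\<forall>F' \<subseteq> F - {e}. ross_sparse G col F'" using F ross unfolding arcs by blast
    ultimately show ?thesis unfolding refl22_sparse_add_arc using assms(5) by (rule refl22_sparse_insert)
  qed
  ultimately show ?thesis unfolding reflection_22_graph_def refl22_sparse_def by blast
qed

end
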